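(* Let $E$ be a spectral set in a FTvN system $(\mathcal V,\mathcal W,\lambda)$. Then: (a) $\overline{E}$, $E^\circ$ and $\partial(E)$ are spectral. (b) If $\mathcal V$ is a Hilbert space, then $\overline{\operatorname{conv}(E)}$ is spectral. (c) If $\mathcal V$ is finite dimensional, then $\operatorname{conv}(E)$ is spectral; additionally, the convex cone generated by $E$ is spectral. (d) If $\mathcal V$ is a Hilbert space, then $E^p$ is spectral. In particular, if $\mathcal V$ is a Hilbert space and $S$ is a spectral set which is also a linear subspace of $\mathcal V$, then $S^\perp$ is spectral. (e) If $\mathcal V$ is a Hilbert space, then the sum of two compact convex spectral sets in $\mathcal V$ is spectral. (f) If $\mathcal V$ is finite dimensional, then the sum of two convex spectral sets is spectral.
   Context: A Fan-Theobald-von Neumann (FTvN) system is a triple $(\mathcal V,\mathcal W,\lambda)$ where $\mathcal V,\mathcal W$ are real inner product spaces and $\lambda:\mathcal V\to\mathcal W$ is a map such that: (A1) $\|\lambda(x)\|=\|x\|$ for all $x$; (A2) $\langle x,y\rangle\le\langle\lambda(x),\lambda(y)\rangle$ for all $x,y$; (A3) for every $c\in\mathcal V$ and $q\in\lambda(\mathcal V)$ there exists $x\in\mathcal V$ with $\lambda(x)=q$ and $\langle c,x\rangle=\langle\lambda(c),\lambda(x)\rangle$. The $\lambda$-orbit of $u$ is $[u]=\{x:\lambda(x)=\lambda(u)\}$. A set $E\subseteq\mathcal V$ is spectral if $E=\lambda^{-1}(Q)$ for some $Q\subseteq\mathcal W$, equivalently $x\in E\Rightarrow[x]\subseteq E$.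 $\overline{E}$, $E^\circ$, $\partial(E)$, $S^\perp$ denote closure, interior, boundary, orthogonal complement; $E^p=\{y\in\mathcal V:\langle y,x\rangle\le0\ \forall x\in E\}$ is the polar cone of $E$. *)

theory Defs
  imports "HOL-Analysis.Analysis"
begin

text \<open>Fan-Theobald-von Neumann system (V, W, lam): V and W are real inner product
  spaces (types of class real_inner), lam : V -> W satisfies (A1)-(A3).\<close>
definition FTvN :: "('v::real_inner \<Rightarrow> 'w::real_inner) \<Rightarrow> bool" where
  "FTvN lam \<longleftrightarrow>
     (\<forall>x. norm (lam x) = norm x) \<and>
     (\<forall>x y. inner x y \<le> inner (lam x) (lam y)) \<and>
     (\<forall>c q. q \<in> range lam \<longrightarrow> (\<exists>x. lam x = q \<and> inner c x = inner (lam c) (lam x)))"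

definition spectral :: "('v \<Rightarrow> 'w) \<Rightarrow> 'v set \<Rightarrow> bool" where
  "spectral lam E \<longleftrightarrow> (\<exists>Q. E = lam -` Q)"

definition polar_cone :: "'v::real_inner set \<Rightarrow> 'v set" where
  "polar_cone E = {y. \<forall>x\<in>E. inner y x \<le> 0}"

definition mink_sum :: "'v::real_vector set \<Rightarrow> 'v set \<Rightarrow> 'v set" where
  "mink_sum A B = {a + b | a b. a \<in> A \<and> b \<in> B}"

definition hilbert_space :: "'v::real_inner itself \<Rightarrow> bool" where
  "hilbert_space _ \<longleftrightarrow> complete (UNIV :: 'v set)"

definition fin_dim :: "'v::real_vector itself \<Rightarrow> bool" where
  "fin_dim _ \<longleftrightarrow> (\<exists>B :: 'v set. finite B \<and> span B = UNIV)"

end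

(*
  The map lam is 1-Lipschitz by (A1) and (A2), and by (A3) every orbit [v] contains a point at
  distance exactly dist (lam u) (lam v) from any given u; hence approximating a point of an orbit
  from E transfers to every other point of the orbit, so closures, and by complementation interiors
  and boundaries, of spectral sets are spectral.

  The convexity statements rest on one separation argument. Let C be closed and convex, z in C and
  lam z' = lam z with z' outside C. Separate z' from C by a functional c. By (A2) and (A3),
  inner c z' <= inner (lam c) (lam z) = inner c' z for some c' in the orbit of c, so z' lies in C
  as soon as every half-space containing C also contains it after c is replaced by any c' in its
  orbit. This holds for C the closed convex hull of a spectral set or of a sum of spectral sets.
  Separating needs nearest points, hence completeness. In finite dimensions the convex hull of a
  compact set is compact (Caratheodory), hence closed. A point of conv E lies in the convex hull of
  the orbits of finitely many points of E, and a point a + b of A + B in the convex hull of the sum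
  of the orbits of a and b; these hulls are spectral and contained in conv E, resp. A + B. Since lam
  is positively homogeneous, the cone generated by E, which is {0} together with the conic hull of
  conv E, is then spectral too. Polar cones, and orthogonal complements as polar cones of
  subspaces, need only the inequality above, no separation.
*)

theory Submission
  imports Defs
begin

lemma spectral_iff: "spectral lam E \<longleftrightarrow> (\<forall>x y. x \<in> E \<longrightarrow> lam y = lam x \<longrightarrow> y \<in> E)"
proof
  assume "\<forall>x y. x \<in> E \<longrightarrow> lam y = lam x \<longrightarrow> y \<in> E"
  then have "E = lam -` (lam ` E)" by auto
  then show "spectral lam E" unfolding spectral_def by blast
qed (auto simp: spectral_def)

lemma spectralI: "(\<And>x y. x \<in> E \<Longrightarrow> lam y = lam x \<Longrightarrow> y \<in> E) \<Longrightarrow> spectral lam E"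
  by (simp add: spectral_iff)

lemma spectralD: "spectral lam E \<Longrightarrow> x \<in> E \<Longrightarrow> lam y = lam x \<Longrightarrow> y \<in> E"
  by (simp add: spectral_iff)

lemma spectral_Compl: "spectral lam E \<Longrightarrow> spectral lam (- E)"
  by (metis spectral_def vimage_Compl)

lemma spectral_Diff: "spectral lam E \<Longrightarrow> spectral lam F \<Longrightarrow> spectral lam (E - F)"
  by (metis spectral_def vimage_Diff)

lemma spectral_vimage_image: "spectral lam (lam -` lam ` S)"
  by (auto simp: spectral_def)

text \<open>Pointwise form of: the support function of \<open>D\<close> does not grow when \<open>c\<close> is replaced by
  a point \<open>c'\<close> of its orbit.\<close>
definition orbit_dominated :: "('v::real_inner \<Rightarrow> 'w) \<Rightarrow> 'v set \<Rightarrow> bool" where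
  "orbit_dominated lam D \<longleftrightarrow>
     (\<forall>c c' y. lam c' = lam c \<longrightarrow> y \<in> D \<longrightarrow> (\<exists>y'\<in>D. inner c' y \<le> inner c y'))"

lemma orbit_dominated_mink_sum:
  assumes "orbit_dominated lam A" "orbit_dominated lam B"
  shows "orbit_dominated lam (mink_sum A B)"
  unfolding orbit_dominated_def
proof (intro allI impI)
  fix c c' z assume c': "lam c' = lam c" and "z \<in> mink_sum A B"
  then obtain a b where z: "z = a + b" "a \<in> A" "b \<in> B" by (auto simp: mink_sum_def)
  obtain a' where "a' \<in> A" "inner c' a \<le> inner c a'"
    using assms(1) c' z(2) unfolding orbit_dominated_def by blast
  moreover obtain b' where "b' \<in> B" "inner c' b \<le> inner c b'"
    using assms(2) c' z(3) unfolding orbit_dominated_def by blast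
  ultimately show "\<exists>y'\<in>mink_sum A B. inner c' z \<le> inner c y'"
    by (intro bexI[of _ "a' + b'"]) (auto simp: z inner_add_right mink_sum_def)
qed

lemma spectral_polar_cone_if_orbit_dominated:
  assumes "orbit_dominated lam D"
  shows "spectral lam (polar_cone D)"
proof (rule spectralI)
  fix y y' assume y: "y \<in> polar_cone D" and y': "lam y' = lam y"
  have "inner y' x \<le> 0" if "x \<in> D" for x
  proof -
    obtain x' where "x' \<in> D" "inner y' x \<le> inner y x'"
      using assms y' \<open>x \<in> D\<close> unfolding orbit_dominated_def by blast
    with y show ?thesis unfolding polar_cone_def by fastforce
  qed
  then show "y' \<in> polar_cone D" unfolding polar_cone_def by blast
qed

lemma orthogonal_comp_eq_polar_cone:
  assumes "subspace S"
  shows "orthogonal_comp S = polar_cone S"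
proof (intro set_eqI iffI)
  fix y assume "y \<in> polar_cone S"
  then have "inner y x \<le> 0 \<and> inner y (- x) \<le> 0" if "x \<in> S" for x
    using assms that subspace_neg unfolding polar_cone_def by blast
  then show "y \<in> orthogonal_comp S"
    by (auto simp: orthogonal_comp_def orthogonal_def inner_commute intro: antisym)
qed (auto simp: orthogonal_comp_def orthogonal_def polar_cone_def inner_commute)

lemma norm_diff_square:
  fixes a b :: "'a::real_inner"
  shows "(norm (a - b))\<^sup>2 = (norm a)\<^sup>2 + (norm b)\<^sup>2 - 2 * inner a b"
  by (simp add: power2_norm_eq_inner inner_diff_left inner_diff_right inner_commute)

lemma norm_diff_midpoint:
  fixes x u v :: "'a::real_inner"
  shows "(norm (u - v))\<^sup>2 = 2 * (norm (x - u))\<^sup>2 + 2 * (norm (x - v))\<^sup>2 - 4 * (norm (x - midpoint u v))\<^sup>2"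
  by (simp add: midpoint_def power2_norm_eq_inner inner_diff_left inner_diff_right inner_add_left
      inner_add_right inner_commute algebra_simps)

lemma convex_minimizing_sequence_Cauchy:
  fixes C :: "'a::real_inner set"
  assumes "convex C" "\<And>n. y n \<in> C" "\<And>z. z \<in> C \<Longrightarrow> d \<le> dist x z"
    and "(\<lambda>n. dist x (y n)) \<longlonglongrightarrow> d"
  shows "Cauchy y"
proof (rule CauchyI)
  fix e :: real assume "0 < e"
  have "0 \<le> d" using LIMSEQ_le_const[OF assms(4)] by simp
  have "(\<lambda>n. (dist x (y n))\<^sup>2 - d\<^sup>2) \<longlonglongrightarrow> 0"
    using tendsto_diff[OF tendsto_power[OF assms(4), of 2] tendsto_const[of "d\<^sup>2"]] by simp
  moreover have "0 < e\<^sup>2 / 4" using \<open>0 < e\<close> by simp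
  ultimately have "\<forall>\<^sub>F n in sequentially. (dist x (y n))\<^sup>2 - d\<^sup>2 < e\<^sup>2 / 4"
    by (rule order_tendstoD(2))
  then obtain M where M: "\<And>n. n \<ge> M \<Longrightarrow> (dist x (y n))\<^sup>2 - d\<^sup>2 < e\<^sup>2 / 4"
    unfolding eventually_sequentially by blast
  show "\<exists>M. \<forall>m\<ge>M. \<forall>n\<ge>M. norm (y m - y n) < e"
  proof (intro exI allI impI)
    fix m n assume "M \<le> m" "M \<le> n"
    have "midpoint (y m) (y n) \<in> C"
      using convexD[OF assms(1,2,2), of "1/2" "1/2"] by (simp add: midpoint_def scaleR_add_right)
    then have "d\<^sup>2 \<le> (norm (x - midpoint (y m) (y n)))\<^sup>2"
      using assms(3) \<open>0 \<le> d\<close> by (simp add: dist_norm power_mono)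
    then have "(norm (y m - y n))\<^sup>2 < e\<^sup>2"
      using M[OF \<open>M \<le> m\<close>] M[OF \<open>M \<le> n\<close>] norm_diff_midpoint[of "y m" "y n" x]
      by (simp add: dist_norm)
    then show "norm (y m - y n) < e"
      using \<open>0 < e\<close> by (simp add: power_less_imp_less_base)
  qed
qed

lemma complete_convex_nearest_point:
  fixes C :: "'a::real_inner set"
  assumes "complete C" "convex C" "C \<noteq> {}"
  obtains p where "p \<in> C" "\<And>y. y \<in> C \<Longrightarrow> dist x p \<le> dist x y"
proof -
  define d where "d = infdist x C"
  have d_le: "d \<le> dist x y" if "y \<in> C" for y
    using infdist_le[OF that] unfolding d_def .
  have "\<exists>y\<in>C. dist x y < d + 1 / Suc n" for n
  proof -
    have "(INF y\<in>C. dist x y) < d + 1 / Suc n"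
      using infdist_notempty[OF assms(3)] unfolding d_def by simp
    then show ?thesis by (simp add: cINF_less_iff assms(3))
  qed
  then obtain y where y: "\<And>n. y n \<in> C" "\<And>n. dist x (y n) < d + 1 / Suc n"
    by metis
  have dist_y: "(\<lambda>n. dist x (y n)) \<longlonglongrightarrow> d"
  proof (rule tendsto_sandwich[of "\<lambda>_. d" _ _ "\<lambda>n. d + 1 / Suc n"])
    show "(\<lambda>n. d + 1 / Suc n) \<longlonglongrightarrow> d"
      using tendsto_add[OF tendsto_const LIMSEQ_Suc[OF lim_inverse_n']] by simp
    show "\<forall>\<^sub>F n in sequentially. dist x (y n) \<le> d + 1 / Suc n"
      using y(2) by (simp add: less_imp_le)
  qed (use d_le y(1) in auto)
  have "Cauchy y"
    using assms(2) y(1) d_le dist_y by (rule convex_minimizing_sequence_Cauchy)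
  then obtain p where "p \<in> C" "y \<longlonglongrightarrow> p"
    using assms(1) y(1) unfolding complete_def by blast
  moreover have "dist x p = d"
    using LIMSEQ_unique[OF tendsto_dist[OF tendsto_const \<open>y \<longlonglongrightarrow> p\<close>] dist_y] .
  ultimately show ?thesis using that d_le by auto
qed

lemma complete_convex_separation:
  fixes C :: "'a::real_inner set"
  assumes "complete C" "convex C" "x \<notin> C"
  obtains c \<alpha> where "\<And>y. y \<in> C \<Longrightarrow> inner c y \<le> \<alpha>" "\<alpha> < inner c x"
proof (cases "C = {}")
  case True
  then show ?thesis using that[of 0 "-1"] by simp
next
  case False
  then obtain p where p: "p \<in> C" "\<And>y. y \<in> C \<Longrightarrow> dist x p \<le> dist x y"
    using complete_convex_nearest_point assms(1,2) by metis
  have "inner (x - p) (y - p) \<le> 0" if "y \<in> C" for y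
    using any_closest_point_dot[OF assms(2) complete_imp_closed[OF assms(1)] p(1) that] p(2) by blast
  moreover have "0 < inner (x - p) (x - p)"
    using assms(3) p(1) by auto
  ultimately show ?thesis
    by (intro that[of "x - p" "inner (x - p) p"]) (auto simp: inner_diff_right)
qed

lemma convergent_subseq_add_scaleR:
  fixes Y :: "nat \<Rightarrow> 'a::real_normed_vector"
  assumes "\<exists>l r. strict_mono r \<and> (Y \<circ> r) \<longlonglongrightarrow> l" "bounded (range s)"
  shows "\<exists>l r. strict_mono r \<and> ((\<lambda>k. Y k + s k *\<^sub>R b) \<circ> r) \<longlonglongrightarrow> l"
proof -
  obtain l1 r1 where r1: "strict_mono r1" "(Y \<circ> r1) \<longlonglongrightarrow> l1" using assms(1) by blast
  have "bounded (range (s \<circ> r1))" by (rule bounded_subset[OF assms(2)]) auto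
  then obtain l2 r2 where r2: "strict_mono r2" "(s \<circ> r1 \<circ> r2) \<longlonglongrightarrow> l2"
    using bounded_imp_convergent_subsequence[of "s \<circ> r1"] by blast
  have "((\<lambda>k. Y k + s k *\<^sub>R b) \<circ> (r1 \<circ> r2)) \<longlonglongrightarrow> l1 + l2 *\<^sub>R b"
    using tendsto_add[OF LIMSEQ_subseq_LIMSEQ[OF r1(2) r2(1)] tendsto_scaleR[OF r2(2) tendsto_const]]
    by (simp add: comp_def)
  then show ?thesis using strict_mono_o[OF r1(1) r2(1)] by blast
qed

text \<open>Induction on the size of a spanning set: split off the component along one spanning vector
  \<open>b\<close>; the rest of the sequence lies in the span of the projections of the other spanning vectors.\<close>
lemma bounded_seq_in_span_convergent_subseq:
  fixes X :: "nat \<Rightarrow> 'a::real_inner"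
  assumes "finite B" "range X \<subseteq> span B" "bounded (range X)"
  shows "\<exists>l r. strict_mono r \<and> (X \<circ> r) \<longlonglongrightarrow> l"
  using assms
proof (induction "card B" arbitrary: B X rule: less_induct)
  case less
  show ?case
  proof (cases "B \<subseteq> {0}")
    case True
    then have "X = (\<lambda>_. 0)"
      using less.prems(2) span_mono[OF True] by (auto simp: fun_eq_iff)
    then show ?thesis by (auto intro!: exI[of _ id] simp: strict_mono_def)
  next
    case False
    then obtain b where b: "b \<in> B" "b \<noteq> 0" by blast
    define s where "s v = inner v b / inner b b" for v
    define P where "P v = v - s v *\<^sub>R b" for v
    have lin_s: "bounded_linear s"
      unfolding s_def by (rule bounded_linear_compose[OF bounded_linear_divide bounded_linear_inner_left])
    have lin_P: "bounded_linear P"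
      unfolding P_def
      by (rule bounded_linear_sub[OF bounded_linear_ident bounded_linear_compose[OF bounded_linear_scaleR_left lin_s]])
    have "P b = 0" using b(2) by (simp add: P_def s_def)
    have "range (P \<circ> X) \<subseteq> span (P ` B)"
      using less.prems(2) span_linear_image[OF bounded_linear.linear[OF lin_P]] by (auto simp: image_comp)
    also have "P ` B \<subseteq> insert 0 (P ` (B - {b}))" using \<open>P b = 0\<close> by auto
    then have "span (P ` B) \<subseteq> span (P ` (B - {b}))" by (metis span_insert_0 span_mono)
    finally have "range (P \<circ> X) \<subseteq> span (P ` (B - {b}))" .
    moreover have "card (P ` (B - {b})) < card B"
      using card_image_le[of "B - {b}" P] card_Diff1_less[OF less.prems(1) b(1)] less.prems(1)
      by simp
    moreover have "bounded (range (P \<circ> X))"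
      using bounded_linear_image[OF less.prems(3) lin_P] by (simp add: image_comp)
    moreover have "finite (P ` (B - {b}))" using less.prems(1) by simp
    ultimately have "\<exists>l r. strict_mono r \<and> (P \<circ> X \<circ> r) \<longlonglongrightarrow> l"
      using less.hyps[of "P ` (B - {b})" "P \<circ> X"] by blast
    moreover have "bounded (range (s \<circ> X))"
      using bounded_linear_image[OF less.prems(3) lin_s] by (simp add: image_comp)
    ultimately have "\<exists>l r. strict_mono r \<and> ((\<lambda>k. (P \<circ> X) k + (s \<circ> X) k *\<^sub>R b) \<circ> r) \<longlonglongrightarrow> l"
      by (rule convergent_subseq_add_scaleR)
    moreover have "(\<lambda>k. (P \<circ> X) k + (s \<circ> X) k *\<^sub>R b) = X"
      by (simp add: fun_eq_iff P_def)
    ultimately show ?thesis by simp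
  qed
qed

lemma fin_dim_bounded_seq_convergent_subseq:
  fixes X :: "nat \<Rightarrow> 'a::real_inner"
  assumes "fin_dim TYPE('a)" "bounded (range X)"
  shows "\<exists>l r. strict_mono r \<and> (X \<circ> r) \<longlonglongrightarrow> l"
proof -
  obtain B :: "'a set" where "finite B" "span B = UNIV"
    using assms(1) unfolding fin_dim_def by blast
  then show ?thesis using bounded_seq_in_span_convergent_subseq[of B X] assms(2) by simp
qed

lemma fin_dim_complete_UNIV:
  assumes "fin_dim TYPE('a::real_inner)"
  shows "complete (UNIV :: 'a set)"
  unfolding complete_def
proof (intro allI impI)
  fix f :: "nat \<Rightarrow> 'a" assume "(\<forall>n. f n \<in> UNIV) \<and> Cauchy f"
  then have "Cauchy f" by blast
  moreover obtain l r where "strict_mono r" "(f \<circ> r) \<longlonglongrightarrow> l"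
    using fin_dim_bounded_seq_convergent_subseq[OF assms cauchy_imp_bounded[OF \<open>Cauchy f\<close>]] by blast
  ultimately show "\<exists>l\<in>UNIV. f \<longlonglongrightarrow> l"
    using Cauchy_converges_subseq by blast
qed

lemma fin_dim_bounded_closed_imp_compact:
  fixes S :: "'a::real_inner set"
  assumes "fin_dim TYPE('a)" "bounded S" "closed S"
  shows "compact S"
  unfolding compact_eq_seq_compact_metric seq_compact_def
proof (intro allI impI)
  fix f :: "nat \<Rightarrow> 'a" assume f: "\<forall>n. f n \<in> S"
  then have "bounded (range f)" using bounded_subset[OF assms(2)] by blast
  then obtain l r where lr: "strict_mono r" "(f \<circ> r) \<longlonglongrightarrow> l"
    using fin_dim_bounded_seq_convergent_subseq[OF assms(1)] by blast
  moreover have "l \<in> S" using closed_sequentially[OF assms(3), of "f \<circ> r"] f lr(2) by simp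
  ultimately show "\<exists>l\<in>S. \<exists>r. strict_mono r \<and> (f \<circ> r) \<longlonglongrightarrow> l" by blast
qed

lemma convex_hull_finite_subset:
  assumes "x \<in> convex hull K"
  obtains T where "finite T" "T \<subseteq> K" "x \<in> convex hull T"
proof -
  obtain T u where "finite T" "T \<subseteq> K" "\<forall>v\<in>T. 0 \<le> u v" "sum u T = 1" "(\<Sum>v\<in>T. u v *\<^sub>R v) = x"
    using assms unfolding convex_hull_explicit by blast
  then show ?thesis using that[of T] by (auto simp: convex_hull_finite)
qed

lemma affine_dependent_if_card_gt:
  assumes "finite B" "T \<subseteq> span B" "finite T" "card B + 1 < card T"
  shows "affine_dependent T"
proof -
  obtain a where "a \<in> T" using assms(4) by fastforce
  have "card ((\<lambda>x. x - a) ` (T - {a})) = card (T - {a})"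
    by (rule card_image) (simp add: inj_on_def)
  also have "\<dots> > card B" using assms(3,4) \<open>a \<in> T\<close> by simp
  finally have "\<not> card ((\<lambda>x. x - a) ` (T - {a})) \<le> card B" by simp
  moreover have "(\<lambda>x. x - a) ` (T - {a}) \<subseteq> span B"
    using assms(2) \<open>a \<in> T\<close> by (auto intro: span_diff)
  ultimately have "dependent ((\<lambda>x. x - a) ` (T - {a}))"
    using independent_span_bound[OF assms(1)] by blast
  moreover have "{x - a |x. x \<in> T - {a}} = (\<lambda>x. x - a) ` (T - {a})" by blast
  ultimately have "affine_dependent (insert a (T - {a}))"
    using dependent_imp_affine_dependent[of a "T - {a}"] by simp
  then show ?thesis using \<open>a \<in> T\<close> by (simp add: insert_absorb)
qed

text \<open>Move along \<open>-w\<close> until the first weight vanishes: the step \<open>t\<close> is the least ratio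
  \<open>u v / w v\<close> over the \<open>v\<close> with \<open>w v > 0\<close>, which exist because \<open>w\<close> sums to zero.\<close>
lemma nonneg_weights_shift_to_zero:
  fixes u w :: "'a \<Rightarrow> real"
  assumes "finite T" "\<forall>v\<in>T. 0 \<le> u v" "sum w T = 0" "v0 \<in> T" "w v0 \<noteq> 0"
  obtains a t where "a \<in> T" "\<And>v. v \<in> T \<Longrightarrow> 0 \<le> u v - t * w v" "u a - t * w a = 0"
proof -
  define Pos where "Pos = {v\<in>T. 0 < w v}"
  have "Pos \<noteq> {}"
  proof
    assume "Pos = {}"
    then have "\<forall>v\<in>T. 0 \<le> - w v" by (auto simp: Pos_def not_less)
    moreover have "(\<Sum>v\<in>T. - w v) = 0" using assms(3) by (simp add: sum_negf)
    ultimately have "\<forall>v\<in>T. - w v = 0" by (simp add: sum_nonneg_eq_0_iff[OF assms(1)])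
    then show False using assms(4,5) by simp
  qed
  then obtain a where a: "a \<in> Pos" "\<And>v. v \<in> Pos \<Longrightarrow> u a / w a \<le> u v / w v"
    using ex_is_arg_min_if_finite[of Pos "\<lambda>v. u v / w v"] assms(1)
    by (auto simp: Pos_def is_arg_min_linorder)
  define t where "t = u a / w a"
  have "0 \<le> t" using a(1) assms(2) by (simp add: t_def Pos_def)
  have "0 \<le> u v - t * w v" if "v \<in> T" for v
  proof (cases "0 < w v")
    case True
    then have "t \<le> u v / w v" using a(2) that by (simp add: t_def Pos_def)
    then show ?thesis using True by (simp add: pos_le_divide_eq)
  next
    case False
    then have "t * w v \<le> 0" using \<open>0 \<le> t\<close> by (simp add: mult_nonneg_nonpos)
    moreover have "0 \<le> u v" using assms(2) that by blast
    ultimately show ?thesis by simp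
  qed
  moreover have "a \<in> T" "u a - t * w a = 0" using a(1) by (simp_all add: t_def Pos_def)
  ultimately show ?thesis using that by blast
qed

lemma convex_hull_affine_dependent_remove:
  assumes "finite T" "affine_dependent T" "x \<in> convex hull T"
  obtains a where "a \<in> T" "x \<in> convex hull (T - {a})"
proof -
  obtain u where u: "\<forall>v\<in>T. 0 \<le> u v" "sum u T = 1" "(\<Sum>v\<in>T. u v *\<^sub>R v) = x"
    using assms(3) by (auto simp: convex_hull_finite[OF assms(1)])
  obtain w v0 where w: "sum w T = 0" "v0 \<in> T" "w v0 \<noteq> 0" "(\<Sum>v\<in>T. w v *\<^sub>R v) = 0"
    using assms(2) by (auto simp: affine_dependent_explicit_finite[OF assms(1)])
  obtain a t where a: "a \<in> T" "\<And>v. v \<in> T \<Longrightarrow> 0 \<le> u v - t * w v" "u a - t * w a = 0"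
    using nonneg_weights_shift_to_zero[OF assms(1) u(1) w(1-3)] by blast
  define u' where "u' v = u v - t * w v" for v
  have "sum u' T = 1"
    using u(2) w(1) by (simp add: u'_def sum_subtractf flip: sum_distrib_left)
  moreover have "(\<Sum>v\<in>T. (t * w v) *\<^sub>R v) = t *\<^sub>R (\<Sum>v\<in>T. w v *\<^sub>R v)"
    by (simp add: scaleR_sum_right)
  then have "(\<Sum>v\<in>T. u' v *\<^sub>R v) = x"
    using u(3) w(4) by (simp add: u'_def scaleR_diff_left sum_subtractf)
  ultimately have "sum u' (T - {a}) = 1" "(\<Sum>v\<in>T - {a}. u' v *\<^sub>R v) = x"
    using sum.remove[OF assms(1) a(1), of u'] sum.remove[OF assms(1) a(1), of "\<lambda>v. u' v *\<^sub>R v"] a(3)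
    by (simp_all add: u'_def)
  moreover have "\<forall>v\<in>T - {a}. 0 \<le> u' v" using a(2) by (simp add: u'_def)
  ultimately have "x \<in> convex hull (T - {a})"
    using assms(1) by (auto simp: convex_hull_finite)
  then show ?thesis using that a(1) by blast
qed

lemma caratheodory_span:
  assumes "finite B" "K \<subseteq> span B" "x \<in> convex hull K"
  shows "\<exists>T\<subseteq>K. finite T \<and> card T \<le> card B + 1 \<and> x \<in> convex hull T"
proof -
  have "\<exists>T'\<subseteq>K. finite T' \<and> card T' \<le> card B + 1 \<and> x \<in> convex hull T'"
    if "finite T" "T \<subseteq> K" "x \<in> convex hull T" for T
    using that
  proof (induction "card T" arbitrary: T rule: less_induct)
    case less
    show ?case
    proof (cases "card T \<le> card B + 1")
      case False
      have "T \<subseteq> span B" using less.prems(2) assms(2) by blast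
      then have "affine_dependent T"
        using affine_dependent_if_card_gt[OF assms(1) _ less.prems(1)] False by simp
      then obtain a where a: "a \<in> T" "x \<in> convex hull (T - {a})"
        using convex_hull_affine_dependent_remove[OF less.prems(1) _ less.prems(3)] by blast
      have "card (T - {a}) < card T" by (rule card_Diff1_less[OF less.prems(1) a(1)])
      moreover have "finite (T - {a})" "T - {a} \<subseteq> K" using less.prems(1,2) by auto
      ultimately show ?thesis using less.hyps a(2) by blast
    qed (use less.prems in blast)
  qed
  moreover obtain T where "finite T" "T \<subseteq> K" "x \<in> convex hull T"
    using convex_hull_finite_subset[OF assms(3)] by blast
  ultimately show ?thesis by blast
qed

definition convex_hull_upto :: "'a::real_vector set \<Rightarrow> nat \<Rightarrow> 'a set" where
  "convex_hull_upto K n = {x. \<exists>T\<subseteq>K. finite T \<and> card T \<le> n \<and> x \<in> convex hull T}"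

lemma convex_hull_upto_0: "convex_hull_upto K 0 = {}"
  by (auto simp: convex_hull_upto_def)

lemma convex_hull_upto_Suc:
  "convex_hull_upto K (Suc n) =
   K \<union> {(1 - u) *\<^sub>R x + u *\<^sub>R y | x y u. 0 \<le> u \<and> u \<le> 1 \<and> x \<in> convex_hull_upto K n \<and> y \<in> K}"
  (is "?L = K \<union> ?R")
proof (intro equalityI subsetI)
  fix z assume "z \<in> ?L"
  then obtain T where T: "T \<subseteq> K" "finite T" "card T \<le> Suc n" "z \<in> convex hull T"
    by (auto simp: convex_hull_upto_def)
  then obtain a where "a \<in> T" by fastforce
  define T' where "T' = T - {a}"
  have T': "T = insert a T'" "T' \<subseteq> K" "finite T'" "card T' \<le> n"
    using T \<open>a \<in> T\<close> by (auto simp: T'_def)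
  show "z \<in> K \<union> ?R"
  proof (cases "T' = {}")
    case True
    then show ?thesis using T T' by auto
  next
    case False
    then obtain u v b where "0 \<le> u" "0 \<le> v" "u + v = 1" "b \<in> convex hull T'" "z = u *\<^sub>R a + v *\<^sub>R b"
      using T(4) unfolding T'(1) convex_hull_insert[OF False] by blast
    moreover have "a \<in> K" using T(1) \<open>a \<in> T\<close> by blast
    ultimately have "z = (1 - u) *\<^sub>R b + u *\<^sub>R a" "0 \<le> u" "u \<le> 1" "a \<in> K"
      "b \<in> convex_hull_upto K n"
      using T' by (auto simp: add.commute eq_diff_eq convex_hull_upto_def)
    then show ?thesis by blast
  qed
next
  fix z assume "z \<in> K \<union> ?R"
  then show "z \<in> ?L"
  proof
    assume "z \<in> K"
    then show ?thesis by (auto simp: convex_hull_upto_def intro!: exI[of _ "{z}"] hull_inc)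
  next
    assume "z \<in> ?R"
    then obtain x y u T where z: "z = (1 - u) *\<^sub>R x + u *\<^sub>R y" "0 \<le> u" "u \<le> 1" "y \<in> K"
      and T: "T \<subseteq> K" "finite T" "card T \<le> n" "x \<in> convex hull T"
      by (auto simp: convex_hull_upto_def)
    have "x \<in> convex hull (insert y T)" "y \<in> convex hull (insert y T)"
      using T(4) hull_mono[of T "insert y T"] by (auto intro: hull_inc)
    then have "z \<in> convex hull (insert y T)"
      using z convexD_alt[OF convex_convex_hull] by simp
    moreover have "card (insert y T) \<le> Suc n" using T(2,3) card_insert_le_m1 by (simp add: card_insert_if)
    ultimately show ?thesis
      using T z(4) unfolding convex_hull_upto_def by (intro CollectI exI[of _ "insert y T"]) simp
  qed
qed

lemma compact_convex_hull_upto: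
  fixes K :: "'a::real_normed_vector set"
  assumes "compact K"
  shows "compact (convex_hull_upto K n)"
  by (induction n)
    (simp_all add: convex_hull_upto_0 convex_hull_upto_Suc compact_Un assms compact_convex_combinations)

lemma fin_dim_compact_convex_hull:
  fixes K :: "'a::real_inner set"
  assumes "fin_dim TYPE('a)" "compact K"
  shows "compact (convex hull K)"
proof -
  obtain B :: "'a set" where B: "finite B" "span B = UNIV"
    using assms(1) unfolding fin_dim_def by blast
  have "convex hull K = convex_hull_upto K (card B + 1)"
    using caratheodory_span[OF B(1)] B(2) hull_mono by (fastforce simp: convex_hull_upto_def)
  then show ?thesis using compact_convex_hull_upto[OF assms(2)] by simp
qed

lemma convex_mink_sum:
  assumes "convex A" "convex B"
  shows "convex (mink_sum A B)"
proof -
  have "mink_sum A B = (\<Union>a\<in>A. \<Union>b\<in>B. {a + b})" by (auto simp: mink_sum_def)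
  then show ?thesis using convex_sums[OF assms] by simp
qed

lemma compact_mink_sum:
  fixes A B :: "'a::real_normed_vector set"
  shows "compact A \<Longrightarrow> compact B \<Longrightarrow> compact (mink_sum A B)"
  unfolding mink_sum_def by (rule compact_sums)

context
  fixes lam :: "'v::real_inner \<Rightarrow> 'w::real_inner"
  assumes ftvn: "FTvN lam"
begin

lemma norm_lam: "norm (lam x) = norm x"
  using ftvn unfolding FTvN_def by blast

lemma inner_le_inner_lam: "inner x y \<le> inner (lam x) (lam y)"
  using ftvn unfolding FTvN_def by blast

lemma exists_orbit_point_aligned: "\<exists>x. lam x = lam u \<and> inner c x = inner (lam c) (lam u)"
  using ftvn unfolding FTvN_def by (metis rangeI)

lemma lam_eq_lam_0_iff: "lam y = lam 0 \<longleftrightarrow> y = 0"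
  by (metis norm_eq_zero norm_lam)

lemma dist_lam_le: "dist (lam u) (lam v) \<le> dist u v"
proof -
  have "(norm (lam u - lam v))\<^sup>2 \<le> (norm (u - v))\<^sup>2"
    using inner_le_inner_lam[of u v] by (simp add: norm_diff_square norm_lam)
  then show ?thesis by (simp add: dist_norm power2_le_iff_abs_le)
qed

lemma exists_orbit_point_at_dist: "\<exists>v'. lam v' = lam v \<and> dist u v' = dist (lam u) (lam v)"
proof -
  obtain v' where v': "lam v' = lam v" "inner u v' = inner (lam u) (lam v)"
    using exists_orbit_point_aligned by blast
  have "(norm (u - v'))\<^sup>2 = (norm (lam u - lam v))\<^sup>2"
    using v' by (simp add: norm_diff_square norm_lam flip: v'(1))
  then show ?thesis using v'(1) by (auto simp: dist_norm power2_eq_iff_nonneg)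
qed

lemma lam_scaleR:
  assumes "0 \<le> c"
  shows "lam (c *\<^sub>R x) = c *\<^sub>R lam x"
proof -
  have "(norm (lam (c *\<^sub>R x) - c *\<^sub>R lam x))\<^sup>2
      = 2 * c\<^sup>2 * (norm x)\<^sup>2 - 2 * c * inner (lam (c *\<^sub>R x)) (lam x)"
    using assms by (simp add: norm_diff_square norm_lam power_mult_distrib)
  also have "\<dots> \<le> 2 * c\<^sup>2 * (norm x)\<^sup>2 - 2 * c * inner (c *\<^sub>R x) x"
    using inner_le_inner_lam[of "c *\<^sub>R x" x] assms by (simp add: mult_left_mono)
  also have "\<dots> = 0"
    by (simp add: dot_square_norm power2_eq_square)
  finally show ?thesis by simp
qed

lemma spectral_imp_orbit_dominated: "spectral lam E \<Longrightarrow> orbit_dominated lam E"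
  unfolding orbit_dominated_def
  by (metis exists_orbit_point_aligned inner_le_inner_lam spectralD)

lemma spectral_closure: "spectral lam E \<Longrightarrow> spectral lam (closure E)"
proof (rule spectralI)
  fix x y assume E: "spectral lam E" and x: "x \<in> closure E" and y: "lam y = lam x"
  show "y \<in> closure E" unfolding closure_approachable
  proof (intro allI impI)
    fix e :: real assume "0 < e"
    then obtain z where z: "z \<in> E" "dist z x < e" using x closure_approachable by metis
    obtain z' where z': "lam z' = lam z" "dist y z' = dist (lam y) (lam z)"
      using exists_orbit_point_at_dist by blast
    have "dist z' y < e"
      using z z' dist_lam_le[of x z] by (simp add: y dist_commute)
    moreover have "z' \<in> E" using spectralD[OF E z(1) z'(1)] .
    ultimately show "\<exists>z\<in>E. dist z y < e" by blast
  qed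
qed

lemma spectral_interior: "spectral lam E \<Longrightarrow> spectral lam (interior E)"
  unfolding interior_closure by (intro spectral_Compl spectral_closure)

lemma spectral_frontier: "spectral lam E \<Longrightarrow> spectral lam (frontier E)"
  unfolding frontier_def by (intro spectral_Diff spectral_closure spectral_interior)

lemma spectral_conic_hull:
  assumes E: "spectral lam E"
  shows "spectral lam (conic hull E)"
proof (rule spectralI)
  fix x y assume "x \<in> conic hull E" and y: "lam y = lam x"
  then obtain c e where x: "x = c *\<^sub>R e" "0 \<le> c" "e \<in> E" by (auto simp: conic_hull_explicit)
  show "y \<in> conic hull E"
  proof (cases "c = 0")
    case True
    then show ?thesis using x y lam_eq_lam_0_iff by (auto simp: conic_hull_contains_0)
  next
    case False
    then have "lam ((1 / c) *\<^sub>R y) = lam e"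
      using x y by (simp add: lam_scaleR)
    then have "(1 / c) *\<^sub>R y \<in> E" using spectralD[OF E x(3)] by blast
    with False x(2) show ?thesis
      unfolding conic_hull_explicit by (auto intro!: exI[of _ c] exI[of _ "(1 / c) *\<^sub>R y"])
  qed
qed

lemma spectral_insert_0: "spectral lam E \<Longrightarrow> spectral lam (insert 0 E)"
  by (rule spectralI) (auto simp: lam_eq_lam_0_iff dest: spectralD)

lemma spectral_closure_convex_hull_if_orbit_dominated:
  assumes "complete (UNIV :: 'v set)" and D: "orbit_dominated lam D"
  shows "spectral lam (closure (convex hull D))" (is "spectral lam ?C")
proof (rule spectralI)
  fix z y assume z: "z \<in> ?C" and y: "lam y = lam z"
  show "y \<in> ?C"
  proof (rule ccontr)
    assume "y \<notin> ?C"
    moreover have "complete ?C" by (rule complete_closed_subset[OF closed_closure subset_UNIV assms(1)])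
    ultimately obtain c \<alpha> where sep: "\<And>x. x \<in> ?C \<Longrightarrow> inner c x \<le> \<alpha>" "\<alpha> < inner c y"
      using complete_convex_separation[OF _ convex_closure[OF convex_convex_hull]] by blast
    obtain c' where c': "lam c' = lam c" "inner z c' = inner (lam z) (lam c)"
      using exists_orbit_point_aligned by blast
    have "D \<subseteq> {x. inner c' x \<le> \<alpha>}"
    proof
      fix x assume "x \<in> D"
      then obtain x' where "x' \<in> D" "inner c' x \<le> inner c x'"
        using D c'(1) unfolding orbit_dominated_def by blast
      moreover have "x' \<in> ?C" using \<open>x' \<in> D\<close> closure_subset hull_subset by (metis subsetD)
      ultimately show "x \<in> {x. inner c' x \<le> \<alpha>}" using sep(1)[of x'] by simp
    qed
    then have "?C \<subseteq> {x. inner c' x \<le> \<alpha>}"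
      by (simp add: closure_minimal hull_minimal convex_halfspace_le closed_halfspace_le)
    then have "inner c' z \<le> \<alpha>" using z by blast
    moreover have "inner c y \<le> inner c' z"
      using inner_le_inner_lam[of c y] c' y by (simp add: inner_commute)
    ultimately show False using sep(2) by simp
  qed
qed

lemma spectral_closure_convex_hull:
  "complete (UNIV :: 'v set) \<Longrightarrow> spectral lam E \<Longrightarrow> spectral lam (closure (convex hull E))"
  by (intro spectral_closure_convex_hull_if_orbit_dominated spectral_imp_orbit_dominated)

lemma spectral_mink_sum_compact:
  assumes "complete (UNIV :: 'v set)"
    and A: "compact A" "convex A" "spectral lam A" and B: "compact B" "convex B" "spectral lam B"
  shows "spectral lam (mink_sum A B)"
proof -
  have "closure (convex hull (mink_sum A B)) = mink_sum A B"
    using compact_mink_sum[OF A(1) B(1)] convex_mink_sum[OF A(2) B(2)]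
    by (simp add: hull_same compact_imp_closed)
  moreover have "orbit_dominated lam (mink_sum A B)"
    using A(3) B(3) by (intro orbit_dominated_mink_sum spectral_imp_orbit_dominated)
  then have "spectral lam (closure (convex hull (mink_sum A B)))"
    by (rule spectral_closure_convex_hull_if_orbit_dominated[OF assms(1)])
  ultimately show ?thesis by simp
qed

lemma spectral_polar_cone: "spectral lam E \<Longrightarrow> spectral lam (polar_cone E)"
  by (intro spectral_polar_cone_if_orbit_dominated spectral_imp_orbit_dominated)

lemma spectral_orthogonal_comp:
  "spectral lam S \<Longrightarrow> subspace S \<Longrightarrow> spectral lam (orthogonal_comp S)"
  by (simp add: orthogonal_comp_eq_polar_cone spectral_polar_cone)

lemma continuous_on_lam: "continuous_on S lam"
  by (rule lipschitz_on_continuous_on[of 1]) (simp add: lipschitz_on_def dist_lam_le)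

lemma fin_dim_compact_vimage_image:
  assumes "fin_dim TYPE('v)" "finite S"
  shows "compact (lam -` lam ` S)"
proof (rule fin_dim_bounded_closed_imp_compact[OF assms(1)])
  show "closed (lam -` lam ` S)"
    using assms(2) by (intro closed_vimage finite_imp_closed finite_imageI continuous_on_lam)
  have "norm x \<le> (\<Sum>s\<in>S. norm s)" if x: "x \<in> lam -` lam ` S" for x
  proof -
    obtain s where "s \<in> S" "lam x = lam s" using x by blast
    then have "norm x = norm s" by (metis norm_lam)
    then show ?thesis using member_le_sum[OF \<open>s \<in> S\<close>, of norm] assms(2) by simp
  qed
  then show "bounded (lam -` lam ` S)" unfolding bounded_iff by blast
qed

lemma fin_dim_spectral_convex_hull_if_orbit_dominated:
  assumes "fin_dim TYPE('v)" "compact D" "orbit_dominated lam D"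
  shows "spectral lam (convex hull D)"
  using spectral_closure_convex_hull_if_orbit_dominated[OF fin_dim_complete_UNIV[OF assms(1)] assms(3)]
    fin_dim_compact_convex_hull[OF assms(1,2)]
  by (simp add: compact_imp_closed closure_closed)

lemma fin_dim_spectral_convex_hull:
  assumes fd: "fin_dim TYPE('v)" and E: "spectral lam E"
  shows "spectral lam (convex hull E)"
proof (rule spectralI)
  fix z y assume "z \<in> convex hull E" and y: "lam y = lam z"
  then obtain S where S: "finite S" "S \<subseteq> E" "z \<in> convex hull S"
    using convex_hull_finite_subset by blast
  define D where "D = lam -` lam ` S"
  have "orbit_dominated lam D"
    unfolding D_def by (rule spectral_imp_orbit_dominated[OF spectral_vimage_image])
  then have "spectral lam (convex hull D)"
    using fin_dim_spectral_convex_hull_if_orbit_dominated[OF fd fin_dim_compact_vimage_image[OF fd S(1)]]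
    by (simp add: D_def)
  moreover have "z \<in> convex hull D" using S(3) hull_mono[of S D] by (auto simp: D_def)
  ultimately have "y \<in> convex hull D" using y by (rule spectralD)
  moreover have "D \<subseteq> E" using S(2) spectralD[OF E] by (auto simp: D_def)
  ultimately show "y \<in> convex hull E" using hull_mono by blast
qed

lemma fin_dim_spectral_convex_cone_hull:
  "fin_dim TYPE('v) \<Longrightarrow> spectral lam E \<Longrightarrow> spectral lam (convex_cone hull E)"
  unfolding convex_cone_hull_separate
  by (intro spectral_insert_0 spectral_conic_hull fin_dim_spectral_convex_hull)

lemma fin_dim_spectral_mink_sum:
  assumes fd: "fin_dim TYPE('v)"
    and A: "convex A" "spectral lam A" and B: "convex B" "spectral lam B"
  shows "spectral lam (mink_sum A B)"
proof (rule spectralI)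
  fix z y assume "z \<in> mink_sum A B" and y: "lam y = lam z"
  then obtain a b where ab: "z = a + b" "a \<in> A" "b \<in> B" by (auto simp: mink_sum_def)
  define Oa where "Oa = lam -` lam ` {a}"
  define Ob where "Ob = lam -` lam ` {b}"
  have "compact (mink_sum Oa Ob)"
    unfolding Oa_def Ob_def by (intro compact_mink_sum fin_dim_compact_vimage_image[OF fd] finite.intros)
  moreover have "orbit_dominated lam (mink_sum Oa Ob)"
    unfolding Oa_def Ob_def
    by (intro orbit_dominated_mink_sum spectral_imp_orbit_dominated spectral_vimage_image)
  ultimately have "spectral lam (convex hull (mink_sum Oa Ob))"
    by (rule fin_dim_spectral_convex_hull_if_orbit_dominated[OF fd])
  moreover have "z \<in> convex hull (mink_sum Oa Ob)"
    using ab by (auto simp: Oa_def Ob_def mink_sum_def intro: hull_inc)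
  ultimately have "y \<in> convex hull (mink_sum Oa Ob)" using y by (rule spectralD)
  moreover have "mink_sum Oa Ob \<subseteq> mink_sum A B"
    using spectralD[OF A(2) ab(2)] spectralD[OF B(2) ab(3)] by (auto simp: Oa_def Ob_def mink_sum_def)
  ultimately show "y \<in> mink_sum A B"
    using hull_minimal[of _ _ convex] convex_mink_sum[OF A(1) B(1)] by blast
qed

end

theorem proposition5p4:
  fixes lam :: "'v::real_inner \<Rightarrow> 'w::real_inner" and E :: "'v set"
  assumes ftvn: "FTvN lam" and spec: "spectral lam E"
  shows
    "(spectral lam (closure E) \<and> spectral lam (interior E) \<and> spectral lam (frontier E))
   \<and> (hilbert_space TYPE('v) \<longrightarrow> spectral lam (closure (convex hull E)))
   \<and> (fin_dim TYPE('v) \<longrightarrow>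
        spectral lam (convex hull E) \<and> spectral lam (convex_cone hull E))
   \<and> (hilbert_space TYPE('v) \<longrightarrow>
        spectral lam (polar_cone E) \<and>
        (\<forall>S. spectral lam S \<and> subspace S \<longrightarrow> spectral lam (orthogonal_comp S)))
   \<and> (hilbert_space TYPE('v) \<longrightarrow>
        (\<forall>A B. compact A \<and> convex A \<and> spectral lam A \<and>
               compact B \<and> convex B \<and> spectral lam B \<longrightarrow> spectral lam (mink_sum A B)))
   \<and> (fin_dim TYPE('v) \<longrightarrow>
        (\<forall>A B. convex A \<and> spectral lam A \<and> convex B \<and> spectral lam B \<longrightarrow>
               spectral lam (mink_sum A B)))"
  unfolding hilbert_space_def
  using spectral_closure[OF ftvn spec] spectral_interior[OF ftvn spec]
    spectral_frontier[OF ftvn spec] spectral_closure_convex_hull[OF ftvn _ spec]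
    fin_dim_spectral_convex_hull[OF ftvn _ spec] fin_dim_spectral_convex_cone_hull[OF ftvn _ spec]
    spectral_polar_cone[OF ftvn spec] spectral_orthogonal_comp[OF ftvn]
    spectral_mink_sum_compact[OF ftvn] fin_dim_spectral_mink_sum[OF ftvn]
  by simp

end
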